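(* Let $\langle T,\le\rangle$ be a temporal flow. Then for every formula $\varphi$ and every finite set of formulas $\Gamma$, $\Gamma\vdash_{\mathrm{NM}}\varphi$ if and only if $\Gamma\models_T\varphi$.
   Context: A temporal flow is a totally ordered infinite set $\langle T,\le\rangle$. Formulas are built from a denumerable set of propositional variables and $\bot$ using $\neg$ and $\to$ (in NM, $\neg\varphi$ is $\varphi\to\bot$, and the other NM connectives $\&,\land,\vee$ are definable from $\neg,\to$). NM (Nilpotent Minimum logic) is the logic MTL (axioms: $(\varphi\to\psi)\to((\psi\to\chi)\to(\varphi\to\chi))$; $(\varphi\&\psi)\to\varphi$; $(\varphi\&\psi)\to(\psi\&\varphi)$; $(\varphi\land\psi)\to\varphi$; $(\varphi\land\psi)\to(\psi\land\varphi)$; $(\varphi\&(\varphi\to\psi))\to(\psi\land\varphi)$; $(\varphi\to(\psi\to\chi))\to((\varphi\&\psi)\to\chi)$; $((\varphi\&\psi)\to\chi)\to(\varphi\to(\psi\to\chi))$; $((\varphi\to\psi)\to\chi)\to(((\psi\to\varphi)\to\chi)\to\chi)$; $\bot\to\varphi$; rule modus ponens) extended by $\neg\neg\varphi\to\varphi$ and $\neg(\varphi\&\psi)\vee((\varphi\land\psi)\to(\varphi\&\psi))$, where $\varphi\vee\psi$ is $((\varphi\to\psi)\to\psi)\land((\psi\to\varphi)\to\varphi)$. Let $T'=T\cup\{-\infty\}$ and $T''=(T'\times\{0,1\})\cup\{\langle-\infty,\frac12\rangle\}$, totally ordered by: for $t<t'$ in $T$, $\langle-\infty,0\rangle<\langle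 t,0\rangle<\langle t',0\rangle<\langle-\infty,\frac12\rangle<\langle t',1\rangle<\langle t,1\rangle<\langle-\infty,1\rangle$. A function $f:T\to\{0,\frac12,1\}$ is admissible if it is constant, or there exist $i\in\{0,1\}$ and $t\in T$ (not the minimum of $T$, if $T$ has one) with $f(t')=i$ for $t'\ge t$ and $f(t'')=\frac12$ for $t''<t$; set $d(f)=\langle-\infty,c\rangle$ if $f$ is constant with value $c$, and $d(f)=\langle t,i\rangle$ in the second case. A temporal assignment is $v:VAR\times T\to\{0,\frac12,1\}$ with every $v(x,\cdot)$ admissible. The map $s^v$ from formulas to $T''$ is: $s^v(x)=d(v(x,\cdot))$; $s^v(\bot)=\langle-\infty,0\rangle$; if $s^v(\varphi)=\langle a,m\rangle$ then $s^v(\neg\varphi)=\langle a,1-m\rangle$; $s^v(\varphi\to\psi)=\langle-\infty,1\rangle$ if $s^v(\varphi)\le s^v(\psi)$, else the maximum of $s^v(\neg\varphi)$ and $s^v(\psi)$ in $T''$. $\Gamma\models_T\varphi$ means: for every temporal assignment $v$ on $T$ with $s^v(\psi)=\langle-\infty,1\rangle$ for all $\psi\in\Gamma$, also $s^v(\varphi)=\langle-\infty,1\rangle$. *)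

theory Defs
  imports Main
begin

datatype fm = Var nat | Bot | Imp fm fm

definition Neg :: "fm \<Rightarrow> fm" where
  "Neg \<phi> = Imp \<phi> Bot"

text \<open>Strong conjunction (NM is involutive): phi & psi := ~(phi -> ~psi).\<close>
definition Conj :: "fm \<Rightarrow> fm \<Rightarrow> fm" where
  "Conj \<phi> \<psi> = Neg (Imp \<phi> (Neg \<psi>))"

text \<open>Weak conjunction (lattice meet), definable in NM from -> and ~:
  with A := (phi->psi)->~phi and B := (psi->phi)->~psi, phi /\ psi := (A->B)->~A.\<close>
definition Wedge :: "fm \<Rightarrow> fm \<Rightarrow> fm" where
  "Wedge \<phi> \<psi> =
     (let A = Imp (Imp \<phi> \<psi>) (Neg \<phi>); B = Imp (Imp \<psi> \<phi>) (Neg \<psi>)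
      in Imp (Imp A B) (Neg A))"

definition Vee :: "fm \<Rightarrow> fm \<Rightarrow> fm" where
  "Vee \<phi> \<psi> = Wedge (Imp (Imp \<phi> \<psi>) \<psi>) (Imp (Imp \<psi> \<phi>) \<phi>)"

inductive nm_axiom :: "fm \<Rightarrow> bool" where
  A1: "nm_axiom (Imp (Imp \<phi> \<psi>) (Imp (Imp \<psi> \<chi>) (Imp \<phi> \<chi>)))"
| A2: "nm_axiom (Imp (Conj \<phi> \<psi>) \<phi>)"
| A3: "nm_axiom (Imp (Conj \<phi> \<psi>) (Conj \<psi> \<phi>))"
| A4: "nm_axiom (Imp (Wedge \<phi> \<psi>) \<phi>)"
| A5: "nm_axiom (Imp (Wedge \<phi> \<psi>) (Wedge \<psi> \<phi>))"
| A6: "nm_axiom (Imp (Conj \<phi> (Imp \<phi> \<psi>)) (Wedge \<psi> \<phi>))"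
| A7a: "nm_axiom (Imp (Imp \<phi> (Imp \<psi> \<chi>)) (Imp (Conj \<phi> \<psi>) \<chi>))"
| A7b: "nm_axiom (Imp (Imp (Conj \<phi> \<psi>) \<chi>) (Imp \<phi> (Imp \<psi> \<chi>)))"
| A8: "nm_axiom (Imp (Imp (Imp \<phi> \<psi>) \<chi>) (Imp (Imp (Imp \<psi> \<phi>) \<chi>) \<chi>))"
| A9: "nm_axiom (Imp Bot \<phi>)"
| Inv: "nm_axiom (Imp (Neg (Neg \<phi>)) \<phi>)"
| NMax: "nm_axiom (Vee (Neg (Conj \<phi> \<psi>)) (Imp (Wedge \<phi> \<psi>) (Conj \<phi> \<psi>)))"

inductive nm_deriv :: "fm set \<Rightarrow> fm \<Rightarrow> bool" where
  hyp: "\<phi> \<in> \<Gamma> \<Longrightarrow> nm_deriv \<Gamma> \<phi>"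
| ax: "nm_axiom \<phi> \<Longrightarrow> nm_deriv \<Gamma> \<phi>"
| mp: "nm_deriv \<Gamma> \<phi> \<Longrightarrow> nm_deriv \<Gamma> (Imp \<phi> \<psi>) \<Longrightarrow> nm_deriv \<Gamma> \<psi>"

datatype tri = Zero | Half | One

fun tri_neg :: "tri \<Rightarrow> tri" where
  "tri_neg Zero = One" | "tri_neg Half = Half" | "tri_neg One = Zero"

text \<open>Elements of T'' are pairs (a, m) with a in T' = T + {-infinity}
  (None represents -infinity, Some t represents t) and m in {0,1/2,1};
  the value 1/2 only occurs with a = -infinity.\<close>
type_synonym 'a tval = "'a option \<times> tri"

fun opt_le :: "'a::linorder option \<Rightarrow> 'a option \<Rightarrow> bool" where
  "opt_le None _ = True"
| "opt_le (Some _) None = False"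
| "opt_le (Some s) (Some t) = (s \<le> t)"

fun tri_rank :: "tri \<Rightarrow> nat" where
  "tri_rank Zero = 0" | "tri_rank Half = 1" | "tri_rank One = 2"

text \<open>The order of T'':
  <-inf,0> < <t,0> < <t',0> < <-inf,1/2> < <t',1> < <t,1> < <-inf,1> for t < t'.\<close>
definition tle :: "'a::linorder tval \<Rightarrow> 'a tval \<Rightarrow> bool" where
  "tle p q =
     (if snd p = snd q then
        (if snd p = One then opt_le (fst q) (fst p) else opt_le (fst p) (fst q))
      else tri_rank (snd p) < tri_rank (snd q))"

definition tmax :: "'a::linorder tval \<Rightarrow> 'a tval \<Rightarrow> 'a tval" where
  "tmax p q = (if tle p q then q else p)"

definition tneg :: "'a tval \<Rightarrow> 'a tval" where
  "tneg p = (fst p, tri_neg (snd p))"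

definition admissible :: "('a::linorder \<Rightarrow> tri) \<Rightarrow> bool" where
  "admissible f \<longleftrightarrow>
     (\<exists>c. \<forall>t. f t = c) \<or>
     (\<exists>i t. i \<in> {Zero, One} \<and> (\<exists>t'. t' < t) \<and>
            (\<forall>t'. t \<le> t' \<longrightarrow> f t' = i) \<and> (\<forall>t''. t'' < t \<longrightarrow> f t'' = Half))"

definition dval :: "('a::linorder \<Rightarrow> tri) \<Rightarrow> 'a tval" where
  "dval f =
     (if \<exists>c. \<forall>t. f t = c then (None, THE c. \<forall>t. f t = c)
      else (THE p. \<exists>i t. p = (Some t, i) \<and> i \<in> {Zero, One} \<and> (\<exists>t'. t' < t) \<and>
               (\<forall>t'. t \<le> t' \<longrightarrow> f t' = i) \<and> (\<forall>t''. t'' < t \<longrightarrow> f t'' = Half)))"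

definition temporal_assignment :: "(nat \<Rightarrow> 'a::linorder \<Rightarrow> tri) \<Rightarrow> bool" where
  "temporal_assignment v \<longleftrightarrow> (\<forall>x. admissible (v x))"

text \<open>s^v. The clause for negation, s^v(~phi) = <a,1-m>, is used via tneg; since
  ~phi abbreviates phi -> Bot, the implication clause yields exactly this value.\<close>
fun sv :: "(nat \<Rightarrow> 'a::linorder \<Rightarrow> tri) \<Rightarrow> fm \<Rightarrow> 'a tval" where
  "sv v (Var x) = dval (v x)"
| "sv v Bot = (None, Zero)"
| "sv v (Imp \<phi> \<psi>) =
     (if tle (sv v \<phi>) (sv v \<psi>) then (None, One)
      else tmax (tneg (sv v \<phi>)) (sv v \<psi>))"

definition temporal_models :: "'a::linorder itself \<Rightarrow> fm set \<Rightarrow> fm \<Rightarrow> bool" where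
  "temporal_models T \<Gamma> \<phi> \<longleftrightarrow>
     (\<forall>v :: nat \<Rightarrow> 'a \<Rightarrow> tri. temporal_assignment v \<longrightarrow>
        (\<forall>\<psi>\<in>\<Gamma>. sv v \<psi> = (None, One)) \<longrightarrow> sv v \<phi> = (None, One))"

end

theory Submission
  imports Defs
begin

text \<open>Soundness: T'' with the negation (a, m) \<mapsto> (a, 1 - m) is an involutive chain whose
  Nilpotent Minimum implication is exactly the clause for s^v(\<phi> \<rightarrow> \<psi>), and every NM axiom
  evaluates to the top \<langle>-\<infinity>, 1\<rangle> of such a chain.

  Completeness: if \<Gamma> does not derive \<phi>, extend \<Gamma> to a theory maximal among those not deriving
  \<phi>. Prelinearity makes this theory linear, so its Lindenbaum algebra is an NM chain in which
  \<phi> is not the top. The classes of the finitely many subformulas of \<Gamma> and \<phi> and of their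
  negations embed into T'' preserving order and negation, hence also implication: \<bottom> and \<top> go
  to \<langle>-\<infinity>, 0\<rangle> and \<langle>-\<infinity>, 1\<rangle>, the negation fixpoint to \<langle>-\<infinity>, 1/2\<rangle>, a class strictly between
  \<bottom> and the fixpoint to \<langle>t, 0\<rangle> and a class strictly between the fixpoint and \<top> to \<langle>t, 1\<rangle>,
  where t is the k-th point of an increasing sequence of non-minimal points of the infinite
  flow T and k is the rank of the class (of its negation, above the fixpoint). The images of
  the variables are values of admissible functions, which yields a temporal countermodel.\<close>

section \<open>Derived rules of NM\<close>

abbreviation Top :: fm where
  "Top \<equiv> Imp Bot Bot"

lemma deriv_axiom_mp: "nm_axiom (Imp a b) \<Longrightarrow> nm_deriv \<Gamma> a \<Longrightarrow> nm_deriv \<Gamma> b"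
  by (rule nm_deriv.mp[OF _ nm_deriv.ax])

lemma deriv_imp_trans:
  "nm_deriv \<Gamma> (Imp a b) \<Longrightarrow> nm_deriv \<Gamma> (Imp b c) \<Longrightarrow> nm_deriv \<Gamma> (Imp a c)"
  by (meson deriv_axiom_mp nm_deriv.mp nm_axiom.A1)

lemma deriv_uncurry: "nm_deriv \<Gamma> (Imp a (Imp b c)) \<Longrightarrow> nm_deriv \<Gamma> (Imp (Conj a b) c)"
  by (rule deriv_axiom_mp[OF nm_axiom.A7a])

lemma deriv_curry: "nm_deriv \<Gamma> (Imp (Conj a b) c) \<Longrightarrow> nm_deriv \<Gamma> (Imp a (Imp b c))"
  by (rule deriv_axiom_mp[OF nm_axiom.A7b])

lemma deriv_K: "nm_deriv \<Gamma> (Imp a (Imp b a))"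
  by (rule deriv_curry, rule nm_deriv.ax, rule nm_axiom.A2)

lemma deriv_Top: "nm_deriv \<Gamma> Top"
  by (intro nm_deriv.ax nm_axiom.A9)

lemma deriv_weaken: "nm_deriv \<Gamma> a \<Longrightarrow> nm_deriv \<Gamma> (Imp b a)"
  using deriv_K nm_deriv.mp by blast

lemma deriv_id: "nm_deriv \<Gamma> (Imp a a)"
proof -
  have "nm_deriv \<Gamma> (Imp (Conj Top (Imp Top a)) (Wedge a Top))"
    by (intro nm_deriv.ax nm_axiom.A6)
  then have "nm_deriv \<Gamma> (Imp (Conj Top (Imp Top a)) a)"
    using deriv_imp_trans nm_deriv.ax nm_axiom.A4 by blast
  then have "nm_deriv \<Gamma> (Imp (Imp Top a) a)"
    using deriv_curry deriv_Top nm_deriv.mp by blast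
  then show ?thesis
    using deriv_K deriv_imp_trans by blast
qed

lemma deriv_suffix: "nm_deriv \<Gamma> (Imp a b) \<Longrightarrow> nm_deriv \<Gamma> (Imp (Imp b c) (Imp a c))"
  by (rule deriv_axiom_mp[OF nm_axiom.A1])

lemma deriv_exchange:
  "nm_deriv \<Gamma> (Imp (Imp a (Imp b c)) (Imp b (Imp a c)))"
proof -
  have "nm_deriv \<Gamma> (Imp (Imp (Conj a b) c) (Imp (Conj b a) c))"
    by (rule deriv_suffix, rule nm_deriv.ax, rule nm_axiom.A3)
  then show ?thesis
    by (meson deriv_imp_trans nm_deriv.ax nm_axiom.A7a nm_axiom.A7b)
qed

lemma deriv_exchange_rule:
  "nm_deriv \<Gamma> (Imp a (Imp b c)) \<Longrightarrow> nm_deriv \<Gamma> (Imp b (Imp a c))"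
  using deriv_exchange nm_deriv.mp by blast

lemma deriv_prefix: "nm_deriv \<Gamma> (Imp a b) \<Longrightarrow> nm_deriv \<Gamma> (Imp (Imp c a) (Imp c b))"
  by (meson deriv_exchange_rule nm_axiom.A1 nm_deriv.ax nm_deriv.mp)

lemma nm_deriv_mono: "nm_deriv \<Gamma> a \<Longrightarrow> \<Gamma> \<subseteq> \<Delta> \<Longrightarrow> nm_deriv \<Delta> a"
  by (induction rule: nm_deriv.induct) (auto intro: nm_deriv.intros)

lemma nm_deriv_finite_subset:
  "nm_deriv \<Gamma> a \<Longrightarrow> \<exists>\<Gamma>'. finite \<Gamma>' \<and> \<Gamma>' \<subseteq> \<Gamma> \<and> nm_deriv \<Gamma>' a"
proof (induction rule: nm_deriv.induct)
  case (hyp a \<Gamma>)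
  then show ?case by (intro exI[of _ "{a}"]) (auto intro: nm_deriv.hyp)
next
  case (ax a \<Gamma>)
  then show ?case by (intro exI[of _ "{}"]) (auto intro: nm_deriv.ax)
next
  case (mp \<Gamma> a b)
  then obtain \<Gamma>\<^sub>1 \<Gamma>\<^sub>2 where "finite \<Gamma>\<^sub>1" "\<Gamma>\<^sub>1 \<subseteq> \<Gamma>" "nm_deriv \<Gamma>\<^sub>1 a"
    and "finite \<Gamma>\<^sub>2" "\<Gamma>\<^sub>2 \<subseteq> \<Gamma>" "nm_deriv \<Gamma>\<^sub>2 (Imp a b)"
    by blast
  then show ?case
    by (intro exI[of _ "\<Gamma>\<^sub>1 \<union> \<Gamma>\<^sub>2"]) (meson finite_UnI le_sup_iff nm_deriv.mp nm_deriv_mono sup_ge1 sup_ge2)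
qed

primrec imp_pow :: "fm \<Rightarrow> nat \<Rightarrow> fm \<Rightarrow> fm" where
  "imp_pow a 0 c = c"
| "imp_pow a (Suc n) c = Imp a (imp_pow a n c)"

lemma imp_pow_add: "imp_pow a m (imp_pow a n c) = imp_pow a (m + n) c"
  by (induction m) auto

lemma deriv_imp_pow_mono:
  "nm_deriv \<Gamma> (Imp b c) \<Longrightarrow> nm_deriv \<Gamma> (Imp (imp_pow a n b) (imp_pow a n c))"
  by (induction n) (auto intro: deriv_prefix)

lemma deriv_imp_pow_weaken: "nm_deriv \<Gamma> c \<Longrightarrow> nm_deriv \<Gamma> (imp_pow a n c)"
  by (induction n) (auto intro: deriv_weaken)

lemma deriv_imp_pow_le:
  "nm_deriv \<Gamma> (imp_pow a m c) \<Longrightarrow> m \<le> n \<Longrightarrow> nm_deriv \<Gamma> (imp_pow a n c)"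
  by (metis deriv_imp_pow_weaken imp_pow_add le_add_diff_inverse2)

lemma deriv_imp_pow_into: "nm_deriv \<Gamma> (Imp c (imp_pow a n c))"
  by (induction n) (auto intro: deriv_id deriv_imp_trans deriv_K)

lemma deriv_imp_pow_exchange:
  "nm_deriv \<Gamma> (Imp (imp_pow a n (Imp b c)) (Imp b (imp_pow a n c)))"
proof (induction n)
  case 0
  then show ?case by (simp add: deriv_id)
next
  case (Suc n)
  then show ?case
    using deriv_prefix deriv_exchange deriv_imp_trans by fastforce
qed

text \<open>NM has no plain deduction theorem, but a hypothesis can be discharged by using it
  finitely many times.\<close>

lemma deduction_imp_pow:
  "nm_deriv (insert a \<Gamma>) c \<Longrightarrow> \<exists>n. nm_deriv \<Gamma> (imp_pow a n c)"
proof (induction "insert a \<Gamma>" c rule: nm_deriv.induct)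
  case (hyp c)
  then consider "c = a" | "c \<in> \<Gamma>"
    by blast
  then show ?case
  proof cases
    case 1
    then have "nm_deriv \<Gamma> (imp_pow a 1 c)"
      by (simp add: deriv_id)
    then show ?thesis ..
  next
    case 2
    then have "nm_deriv \<Gamma> (imp_pow a 0 c)"
      by (simp add: nm_deriv.hyp)
    then show ?thesis ..
  qed
next
  case (ax c)
  then have "nm_deriv \<Gamma> (imp_pow a 0 c)"
    by (simp add: nm_deriv.ax)
  then show ?case ..
next
  case (mp b c)
  then obtain m n where m: "nm_deriv \<Gamma> (imp_pow a m b)" and n: "nm_deriv \<Gamma> (imp_pow a n (Imp b c))"
    by blast
  have "nm_deriv \<Gamma> (Imp b (imp_pow a n c))"
    using n deriv_imp_pow_exchange nm_deriv.mp by blast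
  then have "nm_deriv \<Gamma> (Imp (imp_pow a m b) (imp_pow a (m + n) c))"
    by (metis deriv_imp_pow_mono imp_pow_add)
  then show ?case
    using m nm_deriv.mp by blast
qed

text \<open>Every stack of i hypotheses a \<rightarrow> b and j hypotheses b \<rightarrow> a in front of c is derivable:
  directly if i \<ge> k or j \<ge> k, and otherwise by prelinearity (A8) from the two stacks with one
  more hypothesis.\<close>

lemma prelinearity_imp_pow:
  assumes "nm_deriv \<Gamma> (imp_pow (Imp a b) k c)" and "nm_deriv \<Gamma> (imp_pow (Imp b a) k c)"
  shows "nm_deriv \<Gamma> c"
proof -
  define stack where "stack i j = imp_pow (Imp a b) i (imp_pow (Imp b a) j c)" for i j
  have "nm_deriv \<Gamma> (stack i j)" for i j
  proof (induction "2 * k - (i + j)" arbitrary: i j rule: less_induct)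
    case less
    show ?case
    proof (cases "k \<le> i \<or> k \<le> j")
      case True
      then show ?thesis
      proof
        assume "k \<le> i"
        have "nm_deriv \<Gamma> (imp_pow (Imp a b) k (imp_pow (Imp b a) j c))"
          using deriv_imp_pow_mono[OF deriv_imp_pow_into] assms(1) nm_deriv.mp by blast
        then show ?thesis
          unfolding stack_def using \<open>k \<le> i\<close> deriv_imp_pow_le by blast
      next
        assume "k \<le> j"
        then have "nm_deriv \<Gamma> (imp_pow (Imp b a) j c)"
          using assms(2) deriv_imp_pow_le by blast
        then show ?thesis
          unfolding stack_def by (rule deriv_imp_pow_weaken)
      qed
    next
      case False
      then have "nm_deriv \<Gamma> (stack (Suc i) j)" "nm_deriv \<Gamma> (stack i (Suc j))"
        using less by auto
      then have "nm_deriv \<Gamma> (Imp (Imp a b) (stack i j))" "nm_deriv \<Gamma> (Imp (Imp b a) (stack i j))"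
        unfolding stack_def by (auto intro: nm_deriv.mp[OF _ deriv_imp_pow_exchange])
      then show ?thesis
        using nm_axiom.A8 nm_deriv.ax nm_deriv.mp by blast
    qed
  qed
  from this[of 0 0] show ?thesis
    by (simp add: stack_def)
qed

section \<open>Linear theories\<close>

lemma maximal_unprovable_extension:
  assumes "\<not> nm_deriv \<Gamma> c"
  obtains \<Delta> where "\<Gamma> \<subseteq> \<Delta>" "\<not> nm_deriv \<Delta> c"
    "\<And>\<Delta>'. \<Delta> \<subseteq> \<Delta>' \<Longrightarrow> \<not> nm_deriv \<Delta>' c \<Longrightarrow> \<Delta>' = \<Delta>"
proof -
  let ?A = "{\<Delta>. \<Gamma> \<subseteq> \<Delta> \<and> \<not> nm_deriv \<Delta> c}"
  have "\<exists>M\<in>?A. \<forall>X\<in>?A. M \<subseteq> X \<longrightarrow> X = M"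
  proof (rule subset_Zorn_nonempty)
    have "\<Gamma> \<in> ?A"
      using assms by simp
    then show "?A \<noteq> {}"
      by blast
  next
    fix C assume C: "C \<noteq> {}" "subset.chain ?A C"
    then have C_sub: "C \<subseteq> ?A"
      by (simp add: subset_chain_def)
    have "\<not> nm_deriv (\<Union>C) c"
    proof
      assume "nm_deriv (\<Union>C) c"
      then obtain F where F: "finite F" "F \<subseteq> \<Union>C" "nm_deriv F c"
        using nm_deriv_finite_subset by blast
      then obtain B where "B \<in> C" "F \<subseteq> B"
        using finite_subset_Union_chain[OF F(1,2) C] by blast
      then have "nm_deriv B c" and "B \<in> ?A"
        using F(3) nm_deriv_mono C_sub by auto
      then show False
        by simp
    qed
    moreover obtain \<Delta> where "\<Delta> \<in> C"
      using C(1) by blast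
    then have "\<Gamma> \<subseteq> \<Union>C"
      using C_sub by blast
    ultimately show "\<Union>C \<in> ?A"
      by simp
  qed
  then show thesis
    using that by auto
qed

locale linear_theory =
  fixes D :: "fm set"
  assumes linear: "nm_deriv D (Imp a b) \<or> nm_deriv D (Imp b a)"
    and consistent: "\<not> nm_deriv D Bot"

lemma maximal_unprovable_linear_theory:
  assumes unprovable: "\<not> nm_deriv \<Delta> c"
    and maximal: "\<And>\<Delta>'. \<Delta> \<subseteq> \<Delta>' \<Longrightarrow> \<not> nm_deriv \<Delta>' c \<Longrightarrow> \<Delta>' = \<Delta>"
  shows "linear_theory \<Delta>"
proof
  fix a b
  show "nm_deriv \<Delta> (Imp a b) \<or> nm_deriv \<Delta> (Imp b a)"
  proof (rule ccontr)
    assume "\<not> ?thesis"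
    moreover have "nm_deriv (insert e \<Delta>) c" if "\<not> nm_deriv \<Delta> e" for e
    proof (rule ccontr)
      assume "\<not> nm_deriv (insert e \<Delta>) c"
      then have "insert e \<Delta> = \<Delta>"
        by (rule maximal[OF subset_insertI])
      then show False
        using that nm_deriv.hyp by blast
    qed
    ultimately have "nm_deriv (insert (Imp a b) \<Delta>) c" "nm_deriv (insert (Imp b a) \<Delta>) c"
      by auto
    then obtain m n where "nm_deriv \<Delta> (imp_pow (Imp a b) m c)" "nm_deriv \<Delta> (imp_pow (Imp b a) n c)"
      using deduction_imp_pow by blast
    then have "nm_deriv \<Delta> c"
      using deriv_imp_pow_le[of \<Delta> _ m c "max m n"] deriv_imp_pow_le[of \<Delta> _ n c "max m n"]
      by (auto intro: prelinearity_imp_pow)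
    with unprovable show False ..
  qed
next
  show "\<not> nm_deriv \<Delta> Bot"
    using unprovable nm_deriv.mp nm_deriv.ax nm_axiom.A9 by blast
qed

context linear_theory
begin

definition leq :: "fm \<Rightarrow> fm \<Rightarrow> bool" (infix "\<preceq>" 50) where
  "a \<preceq> b \<longleftrightarrow> nm_deriv D (Imp a b)"

definition equiv :: "fm \<Rightarrow> fm \<Rightarrow> bool" (infix "\<approx>" 50) where
  "a \<approx> b \<longleftrightarrow> a \<preceq> b \<and> b \<preceq> a"

lemma leq_linear: "a \<preceq> b \<or> b \<preceq> a"
  using linear by (simp add: leq_def)

lemma leq_refl [simp]: "a \<preceq> a"
  by (simp add: leq_def deriv_id)

lemma leq_trans [trans]: "a \<preceq> b \<Longrightarrow> b \<preceq> c \<Longrightarrow> a \<preceq> c"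
  unfolding leq_def by (rule deriv_imp_trans)

lemma Bot_leq [simp]: "Bot \<preceq> a"
  unfolding leq_def by (intro nm_deriv.ax nm_axiom.A9)

lemma leq_Top [simp]: "a \<preceq> Top"
  unfolding leq_def by (rule deriv_weaken, rule deriv_Top)

lemma deriv_iff_Top_leq: "nm_deriv D a \<longleftrightarrow> Top \<preceq> a"
  unfolding leq_def using nm_deriv.mp[OF deriv_Top] by (blast intro: deriv_weaken)

lemma not_Top_leq_Bot: "\<not> Top \<preceq> Bot"
  using consistent deriv_iff_Top_leq by blast

lemma Neg_Neg_leq: "Neg (Neg a) \<preceq> a"
  unfolding leq_def by (intro nm_deriv.ax nm_axiom.Inv)

lemma leq_Neg_Neg: "a \<preceq> Neg (Neg a)"
  unfolding leq_def Neg_def by (rule deriv_exchange_rule, rule deriv_id)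

lemma Neg_leq_Neg: "b \<preceq> a \<Longrightarrow> Neg a \<preceq> Neg b"
  unfolding leq_def Neg_def by (rule deriv_suffix)

lemma Neg_leq_Neg_iff [simp]: "Neg a \<preceq> Neg b \<longleftrightarrow> b \<preceq> a"
proof
  assume "Neg a \<preceq> Neg b"
  have "b \<preceq> Neg (Neg b)" by (rule leq_Neg_Neg)
  also have "Neg (Neg b) \<preceq> Neg (Neg a)" using \<open>Neg a \<preceq> Neg b\<close> by (rule Neg_leq_Neg)
  also have "Neg (Neg a) \<preceq> a" by (rule Neg_Neg_leq)
  finally show "b \<preceq> a" .
qed (rule Neg_leq_Neg)

lemma Neg_leq_swap: "Neg a \<preceq> b \<longleftrightarrow> Neg b \<preceq> a"
  by (metis Neg_leq_Neg_iff Neg_Neg_leq leq_Neg_Neg leq_trans)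

lemma Neg_Bot: "Neg Bot = Top"
  by (simp add: Neg_def)

lemma Top_leq_Neg_iff: "Top \<preceq> Neg a \<longleftrightarrow> a \<preceq> Bot"
  using Neg_leq_Neg_iff[of Bot a] by (simp add: Neg_Bot)

lemma Neg_leq_Bot_iff: "Neg a \<preceq> Bot \<longleftrightarrow> Top \<preceq> a"
  using Neg_leq_swap[of a Bot] by (simp add: Neg_Bot)

lemma equiv_Neg_Neg: "Neg (Neg a) \<approx> a"
  by (simp add: equiv_def Neg_Neg_leq leq_Neg_Neg)

lemma equiv_Neg: "a \<approx> b \<Longrightarrow> Neg a \<approx> Neg b"
  by (simp add: equiv_def)

lemma equiv_trans: "a \<approx> b \<Longrightarrow> b \<approx> c \<Longrightarrow> a \<approx> c"
  unfolding equiv_def using leq_trans by blast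

lemma deriv_Vee_prime: "nm_deriv D (Vee a b) \<Longrightarrow> nm_deriv D a \<or> nm_deriv D b"
proof -
  assume ab: "nm_deriv D (Vee a b)"
  have "nm_deriv D (Imp (Imp a b) b)"
    using ab unfolding Vee_def by (rule deriv_axiom_mp[OF nm_axiom.A4])
  moreover have "nm_deriv D (Imp (Imp b a) a)"
    using ab unfolding Vee_def by (meson deriv_axiom_mp nm_axiom.A4 nm_axiom.A5)
  ultimately show ?thesis
    using leq_linear nm_deriv.mp unfolding leq_def by blast
qed

lemma leq_Wedge: "a \<preceq> b \<Longrightarrow> a \<preceq> Wedge b a"
proof -
  assume "a \<preceq> b"
  have "nm_deriv D (Imp (Imp a b) (Imp a (Conj a (Imp a b))))"
    by (rule deriv_exchange_rule, rule deriv_curry, rule deriv_id)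
  then have "a \<preceq> Conj a (Imp a b)"
    using \<open>a \<preceq> b\<close> nm_deriv.mp unfolding leq_def by blast
  also have "Conj a (Imp a b) \<preceq> Wedge b a"
    unfolding leq_def by (intro nm_deriv.ax nm_axiom.A6)
  finally show ?thesis .
qed

lemma Neg_leq_Imp: "Neg a \<preceq> Imp a b"
  unfolding leq_def Neg_def by (rule deriv_prefix, rule nm_deriv.ax, rule nm_axiom.A9)

lemma leq_Imp: "b \<preceq> Imp a b"
  unfolding leq_def by (rule deriv_K)

text \<open>The NM axiom makes a \<rightarrow> b, for a above b, equal to the larger of \<not>a and b,
  as it is in the standard NM chain.\<close>

lemma Imp_leq_Neg_or_leq:
  assumes "\<not> a \<preceq> b"
  shows "Imp a b \<preceq> Neg a \<or> Imp a b \<preceq> b"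
proof -
  let ?t = "Imp a b"
  have tb: "Conj ?t a \<preceq> b"
    unfolding leq_def by (rule deriv_uncurry, rule deriv_id)
  have "nm_deriv D (Neg (Conj ?t a)) \<or> nm_deriv D (Imp (Wedge ?t a) (Conj ?t a))"
    by (intro deriv_Vee_prime nm_deriv.ax nm_axiom.NMax)
  then show ?thesis
  proof
    assume "nm_deriv D (Neg (Conj ?t a))"
    then show ?thesis
      unfolding leq_def Neg_def by (blast intro: deriv_curry)
  next
    assume "nm_deriv D (Imp (Wedge ?t a) (Conj ?t a))"
    then have wb: "Wedge ?t a \<preceq> b"
      using tb leq_trans unfolding leq_def by blast
    show ?thesis
    proof (cases "a \<preceq> ?t")
      case True
      then have "a \<preceq> b"
        using leq_Wedge wb leq_trans by blast
      with assms show ?thesis ..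
    next
      case False
      then have "?t \<preceq> Wedge a ?t"
        using leq_linear leq_Wedge by blast
      also have "Wedge a ?t \<preceq> Wedge ?t a"
        unfolding leq_def by (intro nm_deriv.ax nm_axiom.A5)
      finally show ?thesis
        using wb leq_trans by blast
    qed
  qed
qed

end

section \<open>Involutive chains\<close>

locale involutive_chain =
  fixes neg :: "'b::linorder \<Rightarrow> 'b" and bot :: 'b
  assumes neg_neg [simp]: "neg (neg x) = x"
    and neg_antimono: "x \<le> y \<Longrightarrow> neg y \<le> neg x"
    and bot_least [simp]: "bot \<le> x"
begin

lemma neg_le_neg_iff [simp]: "neg x \<le> neg y \<longleftrightarrow> y \<le> x"
  by (metis neg_neg neg_antimono)

lemma neg_eq_iff [simp]: "neg x = neg y \<longleftrightarrow> x = y"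
  by (metis neg_neg)

lemma le_neg_bot [simp]: "x \<le> neg bot"
  using neg_le_neg_iff bot_least by (metis neg_neg)

lemma le_bot_iff [simp]: "x \<le> bot \<longleftrightarrow> x = bot"
  using bot_least order_antisym by blast

lemma neg_bot_le_iff [simp]: "neg bot \<le> x \<longleftrightarrow> x = neg bot"
  using le_neg_bot order_antisym by blast

lemma le_neg_swap: "x \<le> neg y \<longleftrightarrow> y \<le> neg x"
  by (metis neg_neg neg_le_neg_iff)

lemma neg_max: "neg (max x y) = min (neg x) (neg y)"
  by (cases "x \<le> y") (auto simp: max_def min_def)

definition res :: "'b \<Rightarrow> 'b \<Rightarrow> 'b" where
  "res x y = (if x \<le> y then neg bot else max (neg x) y)"

definition sconj :: "'b \<Rightarrow> 'b \<Rightarrow> 'b" where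
  "sconj x y = neg (res x (neg y))"

text \<open>wedge and vee transcribe the NM definitions of Wedge and Vee literally, so that their
  values on formulas are computed by unfolding.\<close>

definition wedge :: "'b \<Rightarrow> 'b \<Rightarrow> 'b" where
  "wedge x y = (let a = res (res x y) (neg x); b = res (res y x) (neg y) in res (res a b) (neg a))"

definition vee :: "'b \<Rightarrow> 'b \<Rightarrow> 'b" where
  "vee x y = wedge (res (res x y) y) (res (res y x) x)"

lemma res_eq_top_iff: "res x y = neg bot \<longleftrightarrow> x \<le> y"
  unfolding res_def max_def by (metis le_neg_bot neg_eq_iff order_antisym linear bot_least)

lemma res_bot [simp]: "res x bot = neg x"
  unfolding res_def by (auto simp: max_def intro: order_antisym)

lemma sconj_eq: "sconj x y = (if x \<le> neg y then bot else min x y)"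
  unfolding sconj_def res_def by (simp add: neg_max)

lemma wedge_eq_min: "wedge x y = min x y"
  unfolding wedge_def Let_def res_def
  by (cases "x \<le> y"; cases "y \<le> x"; cases "x \<le> neg y")
    (auto simp: max_def min_def intro: order_antisym dest: neg_antimono)

lemma vee_eq_max: "vee x y = max x y"
  unfolding vee_def wedge_eq_min res_def
  by (cases "x \<le> y"; cases "y \<le> x") (auto simp: max_def min_def intro: order_antisym dest: neg_antimono)

lemma res_suffixing: "res x y \<le> res (res y z) (res x z)"
  apply (cases "x \<le> y"; cases "y \<le> z"; cases "x \<le> z")
  apply (auto simp: res_def max_def intro: order_antisym dest: neg_antimono)
  by (meson neg_le_neg_iff le_neg_swap order.trans linear not_le)+

lemma sconj_le_left: "sconj x y \<le> x"
  by (auto simp: sconj_eq)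

lemma sconj_le_commute: "sconj x y \<le> sconj y x"
  by (auto simp: sconj_eq min_def le_neg_swap)

lemma sconj_res_le: "sconj x (res x y) \<le> y"
  by (cases "x \<le> y") (auto simp: sconj_eq res_def max_def min_def intro: order_antisym dest: neg_antimono)

lemma res_res_le_res_sconj: "res x (res y z) \<le> res (sconj x y) z"
  apply (cases "x \<le> neg y"; cases "y \<le> z"; cases "x \<le> z")
  apply (auto simp: sconj_eq res_def max_def min_def intro: order_antisym dest: neg_antimono)
  by (meson neg_le_neg_iff le_neg_swap order.trans linear not_le)+

lemma res_sconj_le_res_res: "res (sconj x y) z \<le> res x (res y z)"
  apply (cases "x \<le> neg y"; cases "y \<le> z"; cases "x \<le> z")
  apply (auto simp: sconj_eq res_def max_def min_def intro: order_antisym dest: neg_antimono)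
  by (meson neg_le_neg_iff le_neg_swap order.trans linear not_le)+

lemma res_prelinearity: "res (res x y) z \<le> res (res (res y x) z) z"
  by (cases "x \<le> y"; cases "y \<le> x") (auto simp: res_def max_def intro: order_antisym dest: neg_antimono)

lemma nm_axiom_top: "max (neg (sconj x y)) (res (min x y) (sconj x y)) = neg bot"
  by (cases "x \<le> neg y") (auto simp: sconj_eq res_def max_def min_def intro: order_antisym dest: neg_antimono)

end

section \<open>The chain T''\<close>

lemma opt_le_refl: "opt_le x x"
  by (cases x) auto

lemma opt_le_trans: "opt_le x y \<Longrightarrow> opt_le y z \<Longrightarrow> opt_le x z"
  by (cases x; cases y; cases z) auto

lemma opt_le_antisym: "opt_le x y \<Longrightarrow> opt_le y x \<Longrightarrow> x = y"
  by (cases x; cases y) auto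

lemma opt_le_linear: "opt_le x y \<or> opt_le y x"
  by (cases x; cases y) auto

lemma tri_rank_eq_iff: "tri_rank a = tri_rank b \<longleftrightarrow> a = b"
  by (cases a; cases b) auto

lemma tle_refl: "tle p p"
  by (simp add: tle_def opt_le_refl)

lemma tle_trans: "tle p q \<Longrightarrow> tle q r \<Longrightarrow> tle p r"
  unfolding tle_def by (auto split: if_splits intro: opt_le_trans simp: tri_rank_eq_iff)

lemma tle_antisym: "tle p q \<Longrightarrow> tle q p \<Longrightarrow> p = q"
  unfolding tle_def by (auto split: if_splits intro: opt_le_antisym simp: prod_eq_iff)

lemma tle_linear: "tle p q \<or> tle q p"
  unfolding tle_def using opt_le_linear by (cases "snd p"; cases "snd q") auto

definition legal_tval :: "'a tval \<Rightarrow> bool" where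
  "legal_tval p \<longleftrightarrow> (snd p = Half \<longrightarrow> fst p = None)"

typedef 'a tpoint = "{p :: 'a tval. legal_tval p}"
  by (rule exI[of _ "(None, Zero)"]) (simp add: legal_tval_def)

instantiation tpoint :: (linorder) linorder
begin

definition less_eq_tpoint :: "'a tpoint \<Rightarrow> 'a tpoint \<Rightarrow> bool" where
  "x \<le> y \<longleftrightarrow> tle (Rep_tpoint x) (Rep_tpoint y)"

definition less_tpoint :: "'a tpoint \<Rightarrow> 'a tpoint \<Rightarrow> bool" where
  "x < y \<longleftrightarrow> tle (Rep_tpoint x) (Rep_tpoint y) \<and> \<not> tle (Rep_tpoint y) (Rep_tpoint x)"

instance
proof
  fix x y z :: "'a tpoint"
  show "x < y \<longleftrightarrow> x \<le> y \<and> \<not> y \<le> x"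
    by (simp add: less_eq_tpoint_def less_tpoint_def)
  show "x \<le> x"
    by (simp add: less_eq_tpoint_def tle_refl)
  show "x \<le> y \<Longrightarrow> y \<le> z \<Longrightarrow> x \<le> z"
    unfolding less_eq_tpoint_def by (rule tle_trans)
  show "x \<le> y \<Longrightarrow> y \<le> x \<Longrightarrow> x = y"
    unfolding less_eq_tpoint_def by (metis Rep_tpoint_inject tle_antisym)
  show "x \<le> y \<or> y \<le> x"
    unfolding less_eq_tpoint_def by (rule tle_linear)
qed

end

lemma legal_tval_tneg: "legal_tval p \<Longrightarrow> legal_tval (tneg p)"
  unfolding legal_tval_def tneg_def by (cases "snd p") auto

lemma tle_tneg: "legal_tval p \<Longrightarrow> legal_tval q \<Longrightarrow> tle p q \<Longrightarrow> tle (tneg q) (tneg p)"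
  unfolding tle_def tneg_def legal_tval_def by (cases "snd p"; cases "snd q") auto

lemma tri_neg_tri_neg [simp]: "tri_neg (tri_neg m) = m"
  by (cases m) auto

lemma tneg_tneg [simp]: "tneg (tneg p) = p"
  by (simp add: tneg_def)

definition tpoint_neg :: "'a::linorder tpoint \<Rightarrow> 'a tpoint" where
  "tpoint_neg x = Abs_tpoint (tneg (Rep_tpoint x))"

definition tpoint_bot :: "'a::linorder tpoint" where
  "tpoint_bot = Abs_tpoint (None, Zero)"

lemma Rep_tpoint_neg: "Rep_tpoint (tpoint_neg x) = tneg (Rep_tpoint x)"
  using Rep_tpoint[of x] by (simp add: tpoint_neg_def Abs_tpoint_inverse legal_tval_tneg)

lemma Rep_tpoint_bot: "Rep_tpoint tpoint_bot = (None, Zero)"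
  by (simp add: tpoint_bot_def Abs_tpoint_inverse legal_tval_def)

lemma Rep_tpoint_top: "Rep_tpoint (tpoint_neg tpoint_bot) = (None, One)"
  by (simp add: Rep_tpoint_neg Rep_tpoint_bot tneg_def)

interpretation tpoint: involutive_chain tpoint_neg tpoint_bot
proof
  fix x y :: "'a tpoint"
  show "tpoint_neg (tpoint_neg x) = x"
    by (simp add: Rep_tpoint_inject[symmetric] Rep_tpoint_neg)
  show "x \<le> y \<Longrightarrow> tpoint_neg y \<le> tpoint_neg x"
    using Rep_tpoint[of x] Rep_tpoint[of y] by (simp add: less_eq_tpoint_def Rep_tpoint_neg tle_tneg)
  show "tpoint_bot \<le> x"
    by (cases "snd (Rep_tpoint x)") (auto simp: less_eq_tpoint_def Rep_tpoint_bot tle_def)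
qed

section \<open>Soundness\<close>

lemma dval_const: "(\<And>t. f t = c) \<Longrightarrow> dval f = (None, c)"
  unfolding dval_def by auto

lemma dval_step:
  assumes i: "i \<in> {Zero, One}" and t: "\<exists>t'. t' < t"
    and above: "\<And>t'. t \<le> t' \<Longrightarrow> f t' = i" and below: "\<And>t'. t' < t \<Longrightarrow> f t' = Half"
  shows "dval f = (Some t, i)"
proof -
  have not_const: "\<nexists>c. \<forall>t. f t = c"
  proof
    assume "\<exists>c. \<forall>t. f t = c"
    moreover obtain t' where "t' < t"
      using t by blast
    ultimately show False
      using i above[of t] below[of t'] by auto
  qed
  have "(THE p. \<exists>i t. p = (Some t, i) \<and> i \<in> {Zero, One} \<and> (\<exists>t'. t' < t) \<and>
      (\<forall>t'. t \<le> t' \<longrightarrow> f t' = i) \<and> (\<forall>t''. t'' < t \<longrightarrow> f t'' = Half)) = (Some t, i)"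
  proof (rule the_equality)
    fix p
    assume "\<exists>i' s. p = (Some s, i') \<and> i' \<in> {Zero, One} \<and> (\<exists>t'. t' < s) \<and>
      (\<forall>t'. s \<le> t' \<longrightarrow> f t' = i') \<and> (\<forall>t''. t'' < s \<longrightarrow> f t'' = Half)"
    then obtain i' s where p: "p = (Some s, i')" "i' \<in> {Zero, One}"
      and above': "\<And>t'. s \<le> t' \<Longrightarrow> f t' = i'" and below': "\<And>t'. t' < s \<Longrightarrow> f t' = Half"
      by blast
    have "\<not> s < t"
      using below[of s] above'[of s] p(2) by auto
    moreover have "\<not> t < s"
      using below'[of t] above[of t] i by auto
    ultimately have "s = t"
      by simp
    then show "p = (Some t, i)"
      using p above above'[of t] by simp
  next
    show "\<exists>i' s. (Some t, i) = (Some s, i') \<and> i' \<in> {Zero, One} \<and> (\<exists>t'. t' < s) \<and>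
      (\<forall>t'. s \<le> t' \<longrightarrow> f t' = i') \<and> (\<forall>t''. t'' < s \<longrightarrow> f t'' = Half)"
      using assms by blast
  qed
  then show ?thesis
    unfolding dval_def using not_const by simp
qed

lemma legal_tval_dval:
  assumes "admissible f"
  shows "legal_tval (dval f)"
proof (cases "\<exists>c. \<forall>t. f t = c")
  case True
  then show ?thesis
    by (auto simp: dval_const legal_tval_def)
next
  case False
  then obtain i t where "i \<in> {Zero, One}" "\<exists>t'. t' < t"
    "\<forall>t'. t \<le> t' \<longrightarrow> f t' = i" "\<forall>t'. t' < t \<longrightarrow> f t' = Half"
    using assms unfolding admissible_def by blast
  then show ?thesis
    by (auto simp: dval_step legal_tval_def)
qed

lemma legal_tval_sv: "temporal_assignment v \<Longrightarrow> legal_tval (sv v \<phi>)"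
proof (induction \<phi>)
  case (Var x)
  then show ?case
    by (simp add: temporal_assignment_def legal_tval_dval)
next
  case Bot
  then show ?case
    by (simp add: legal_tval_def)
next
  case (Imp a b)
  then show ?case
    by (auto simp: tmax_def legal_tval_tneg) (simp add: legal_tval_def)
qed

definition sem :: "(nat \<Rightarrow> 'a::linorder \<Rightarrow> tri) \<Rightarrow> fm \<Rightarrow> 'a tpoint" where
  "sem v \<phi> = Abs_tpoint (sv v \<phi>)"

context
  fixes v :: "nat \<Rightarrow> 'a::linorder \<Rightarrow> tri"
  assumes v: "temporal_assignment v"
begin

lemma Rep_tpoint_sem: "Rep_tpoint (sem v \<phi>) = sv v \<phi>"
  by (simp add: sem_def Abs_tpoint_inverse legal_tval_sv[OF v])

lemma sv_eq_top_iff: "sv v \<phi> = (None, One) \<longleftrightarrow> sem v \<phi> = tpoint_neg tpoint_bot"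
  by (simp add: Rep_tpoint_inject[symmetric] Rep_tpoint_sem Rep_tpoint_top)

lemma sem_Bot [simp]: "sem v Bot = tpoint_bot"
  by (simp add: Rep_tpoint_inject[symmetric] Rep_tpoint_sem Rep_tpoint_bot)

lemma sem_Imp [simp]: "sem v (Imp a b) = tpoint.res (sem v a) (sem v b)"
  by (simp add: Rep_tpoint_inject[symmetric] Rep_tpoint_sem tpoint.res_def less_eq_tpoint_def
      Rep_tpoint_top tmax_def max_def Rep_tpoint_neg Rep_tpoint_bot tneg_def)

lemma sem_Neg [simp]: "sem v (Neg a) = tpoint_neg (sem v a)"
  by (simp add: Neg_def)

lemma sem_Conj [simp]: "sem v (Conj a b) = tpoint.sconj (sem v a) (sem v b)"
  by (simp add: Conj_def tpoint.sconj_def)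

lemma sem_Wedge [simp]: "sem v (Wedge a b) = min (sem v a) (sem v b)"
  by (simp add: Wedge_def tpoint.wedge_eq_min[symmetric] tpoint.wedge_def Let_def)

lemma sem_Vee [simp]: "sem v (Vee a b) = max (sem v a) (sem v b)"
  by (simp add: Vee_def tpoint.vee_eq_max[symmetric] tpoint.vee_def del: sem_Wedge)
    (simp add: Wedge_def tpoint.wedge_def Let_def)

lemma sem_nm_axiom: "nm_axiom \<phi> \<Longrightarrow> sem v \<phi> = tpoint_neg tpoint_bot"
  by (induction rule: nm_axiom.induct)
    (simp_all add: tpoint.res_eq_top_iff tpoint.res_suffixing tpoint.sconj_le_left
      tpoint.sconj_le_commute tpoint.sconj_res_le tpoint.res_res_le_res_sconj
      tpoint.res_sconj_le_res_res tpoint.res_prelinearity tpoint.nm_axiom_top)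

lemma nm_deriv_sound:
  "nm_deriv \<Gamma> \<phi> \<Longrightarrow> \<forall>\<psi>\<in>\<Gamma>. sv v \<psi> = (None, One) \<Longrightarrow> sv v \<phi> = (None, One)"
proof (induction rule: nm_deriv.induct)
  case (hyp \<phi> \<Gamma>)
  then show ?case by blast
next
  case (ax \<phi> \<Gamma>)
  then show ?case by (simp add: sv_eq_top_iff sem_nm_axiom)
next
  case (mp \<Gamma> a b)
  then show ?case
    unfolding sv_eq_top_iff by (simp add: tpoint.res_eq_top_iff)
qed

end

section \<open>Completeness\<close>

primrec subformulas :: "fm \<Rightarrow> fm set" where
  "subformulas (Var x) = {Var x}"
| "subformulas Bot = {Bot}"
| "subformulas (Imp a b) = insert (Imp a b) (subformulas a \<union> subformulas b)"

lemma finite_subformulas: "finite (subformulas \<phi>)"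
  by (induction \<phi>) auto

lemma subformulas_self: "\<phi> \<in> subformulas \<phi>"
  by (cases \<phi>) auto

definition realizable :: "'a::linorder tval \<Rightarrow> bool" where
  "realizable p \<longleftrightarrow> (\<forall>t i. p = (Some t, i) \<longrightarrow> i \<noteq> Half \<and> (\<exists>t'. t' < t))"

fun realize :: "'a::linorder tval \<Rightarrow> 'a \<Rightarrow> tri" where
  "realize (None, c) = (\<lambda>_. c)"
| "realize (Some t, i) = (\<lambda>s. if t \<le> s then i else Half)"

lemma realize_admissible:
  assumes "realizable p"
  shows "admissible (realize p)" and "dval (realize p) = p"
proof -
  have "admissible (realize p) \<and> dval (realize p) = p"
  proof (cases p rule: realize.cases)
    case (1 c)
    then show ?thesis
      by (auto simp: admissible_def dval_const)
  next
    case (2 t i)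
    with assms have "i \<in> {Zero, One}" "\<exists>t'. t' < t"
      unfolding realizable_def by (cases i; auto)+
    then have "admissible (realize p)"
      unfolding admissible_def using 2 by (intro disjI2 exI[of _ i] exI[of _ t]) auto
    moreover have "dval (realize p) = p"
      using 2 \<open>i \<in> {Zero, One}\<close> \<open>\<exists>t'. t' < t\<close> by (auto intro: dval_step)
    ultimately show ?thesis ..
  qed
  then show "admissible (realize p)" "dval (realize p) = p"
    by auto
qed

lemma strict_mono_nonminimal_seq:
  assumes "infinite (UNIV :: 'a set)"
  obtains g :: "nat \<Rightarrow> 'a::linorder" where "strict_mono_on {..<n} g" "\<And>i. i < n \<Longrightarrow> \<exists>t. t < g i"
proof -
  obtain A :: "'a set" where A: "finite A" "card A = Suc n"
    using infinite_arbitrarily_large[OF assms] by blast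
  define xs where "xs = sorted_list_of_set A"
  have xs: "sorted_wrt (<) xs" "length xs = Suc n"
    using A by (simp_all add: xs_def)
  show thesis
  proof
    show "strict_mono_on {..<n} (\<lambda>i. xs ! Suc i)"
      using xs by (intro strict_mono_onI) (auto intro: sorted_wrt_nth_less)
    show "\<exists>t. t < xs ! Suc i" if "i < n" for i
      using sorted_wrt_nth_less[OF xs(1), of 0 "Suc i"] xs(2) that by auto
  qed
qed

context linear_theory
begin

text \<open>The kind of a formula locates its class in the Lindenbaum chain relative to
  \<bottom>, the negation fixpoint and \<top>; the four conditions are upward closed and
  nested, so the kind is monotone.\<close>

definition kind :: "fm \<Rightarrow> nat" where
  "kind a = (if Top \<preceq> a then 4 else if \<not> a \<preceq> Neg a then 3 else if Neg a \<preceq> a then 2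
     else if \<not> a \<preceq> Bot then 1 else 0)"

lemma not_leq_Neg_of_Top_leq: "Top \<preceq> a \<Longrightarrow> \<not> a \<preceq> Neg a"
  using Top_leq_Neg_iff leq_trans not_Top_leq_Bot by blast

lemma Neg_leq_of_not_leq_Neg: "\<not> a \<preceq> Neg a \<Longrightarrow> Neg a \<preceq> a"
  using leq_linear by blast

lemma not_leq_Bot_of_Neg_leq: "Neg a \<preceq> a \<Longrightarrow> \<not> a \<preceq> Bot"
  using Top_leq_Neg_iff leq_trans not_Top_leq_Bot by blast

lemma kind_mono: "a \<preceq> b \<Longrightarrow> kind a \<le> kind b"
proof -
  assume ab: "a \<preceq> b"
  then have "Top \<preceq> a \<Longrightarrow> Top \<preceq> b" "\<not> a \<preceq> Bot \<Longrightarrow> \<not> b \<preceq> Bot"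
    "\<not> a \<preceq> Neg a \<Longrightarrow> \<not> b \<preceq> Neg b" "Neg a \<preceq> a \<Longrightarrow> Neg b \<preceq> b"
    by (meson Neg_leq_Neg_iff leq_trans)+
  then show ?thesis
    unfolding kind_def
    using not_leq_Neg_of_Top_leq Neg_leq_of_not_leq_Neg not_leq_Bot_of_Neg_leq by auto
qed

lemma kind_le_4: "kind a \<le> 4"
  by (simp add: kind_def)

lemma kind_Neg: "kind (Neg a) = 4 - kind a"
  unfolding kind_def
  using not_leq_Neg_of_Top_leq Neg_leq_of_not_leq_Neg not_leq_Bot_of_Neg_leq
  by (auto simp: Top_leq_Neg_iff Neg_leq_Bot_iff)

lemma kind_eq_0_iff: "kind a = 0 \<longleftrightarrow> a \<preceq> Bot"
  unfolding kind_def
  using not_leq_Neg_of_Top_leq Neg_leq_of_not_leq_Neg not_leq_Bot_of_Neg_leq by auto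

lemma kind_eq_2_iff: "kind a = 2 \<longleftrightarrow> a \<approx> Neg a"
  unfolding kind_def equiv_def using not_leq_Neg_of_Top_leq by auto

lemma kind_eq_4_iff: "kind a = 4 \<longleftrightarrow> Top \<preceq> a"
  by (simp add: kind_def)

lemma kind_equiv: "a \<approx> b \<Longrightarrow> kind a = kind b"
  by (simp add: equiv_def kind_mono le_antisym)

end

locale lindenbaum_embedding = linear_theory D for D +
  fixes S :: "fm set" and g :: "nat \<Rightarrow> 'a::linorder" and n :: nat
  assumes finite_S: "finite S"
    and Neg_S: "a \<in> S \<Longrightarrow> \<exists>c\<in>S. Neg a \<approx> c"
    and g_strict_mono: "strict_mono_on {..<n} g"
    and g_nonminimal: "i < n \<Longrightarrow> \<exists>t. t < g i"
    and card_S_less: "card S < n"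
begin

definition S_up_to_equiv :: "fm set" where
  "S_up_to_equiv = {a. \<exists>c\<in>S. a \<approx> c}"

lemma S_subset_S_up_to_equiv: "S \<subseteq> S_up_to_equiv"
  unfolding S_up_to_equiv_def equiv_def using leq_refl by blast

lemma Neg_S_up_to_equiv: "a \<in> S_up_to_equiv \<Longrightarrow> Neg a \<in> S_up_to_equiv"
  unfolding S_up_to_equiv_def using Neg_S equiv_Neg equiv_trans by blast

text \<open>By linearity, rank a counts the members of S strictly below a.\<close>

definition rank :: "fm \<Rightarrow> nat" where
  "rank a = card {b \<in> S. \<not> a \<preceq> b}"

lemma rank_less_n: "rank a < n"
proof -
  have "rank a \<le> card S"
    unfolding rank_def using finite_S by (intro card_mono) auto
  then show ?thesis
    using card_S_less by linarith
qed

lemma rank_mono: "a \<preceq> b \<Longrightarrow> rank a \<le> rank b"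
  unfolding rank_def using finite_S leq_trans by (intro card_mono) auto

lemma rank_less: "b \<in> S_up_to_equiv \<Longrightarrow> \<not> a \<preceq> b \<Longrightarrow> rank b < rank a"
proof -
  assume "b \<in> S_up_to_equiv" "\<not> a \<preceq> b"
  then obtain c where c: "c \<in> S" "b \<approx> c"
    by (auto simp: S_up_to_equiv_def)
  have "{d \<in> S. \<not> b \<preceq> d} \<subseteq> {d \<in> S. \<not> a \<preceq> d}"
    using \<open>\<not> a \<preceq> b\<close> leq_linear leq_trans by blast
  moreover have "c \<in> {d \<in> S. \<not> a \<preceq> d}" "c \<notin> {d \<in> S. \<not> b \<preceq> d}"
    using c \<open>\<not> a \<preceq> b\<close> leq_trans unfolding equiv_def by blast+
  ultimately have "{d \<in> S. \<not> b \<preceq> d} \<subset> {d \<in> S. \<not> a \<preceq> d}"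
    by blast
  then show ?thesis
    unfolding rank_def using finite_S by (simp add: psubset_card_mono)
qed

lemma rank_le_iff: "b \<in> S_up_to_equiv \<Longrightarrow> rank a \<le> rank b \<longleftrightarrow> a \<preceq> b"
  using rank_less[of b a] rank_mono[of a b] by linarith

lemma rank_equiv: "a \<approx> b \<Longrightarrow> rank a = rank b"
  by (simp add: equiv_def rank_mono le_antisym)

lemma g_le_iff: "i < n \<Longrightarrow> j < n \<Longrightarrow> g i \<le> g j \<longleftrightarrow> i \<le> j"
  using strict_mono_on_less_eq[OF g_strict_mono] by simp

text \<open>Above the negation fixpoint the time is taken from the negation, so that embed turns
  Neg into tneg.\<close>

definition embed :: "fm \<Rightarrow> 'a tval" where
  "embed a = (if kind a = 0 then (None, Zero)
     else if kind a = 1 then (Some (g (rank a)), Zero)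
     else if kind a = 2 then (None, Half)
     else if kind a = 3 then (Some (g (rank (Neg a))), One)
     else (None, One))"

lemma embed_equiv: "a \<approx> b \<Longrightarrow> embed a = embed b"
  unfolding embed_def by (simp add: kind_equiv rank_equiv[of a b] rank_equiv[OF equiv_Neg])

lemma embed_Neg: "embed (Neg a) = tneg (embed a)"
  using kind_le_4[of a] rank_equiv[OF equiv_Neg_Neg[of a]]
  by (auto simp: embed_def kind_Neg tneg_def)

lemma embed_eq_top_iff: "embed a = (None, One) \<longleftrightarrow> Top \<preceq> a"
  using kind_le_4[of a] by (auto simp: embed_def kind_eq_4_iff[symmetric])

lemma realizable_embed: "realizable (embed a)"
  using g_nonminimal rank_less_n by (auto simp: realizable_def embed_def)

lemma tle_embed_of_kind_less:
  "kind a < kind b \<Longrightarrow> tle (embed a) (embed b) \<and> \<not> tle (embed b) (embed a)"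
  using kind_le_4[of b] by (auto simp: embed_def tle_def)

lemma tle_embed_iff:
  assumes "a \<in> S_up_to_equiv" "b \<in> S_up_to_equiv"
  shows "tle (embed a) (embed b) \<longleftrightarrow> a \<preceq> b"
proof (cases "kind a = kind b")
  case False
  then show ?thesis
    using tle_embed_of_kind_less kind_mono leq_linear by (metis linorder_neqE_nat not_le)
next
  case True
  have "kind a = 0 \<or> kind a = 1 \<or> kind a = 2 \<or> kind a = 3 \<or> kind a = 4"
    using kind_le_4[of a] by linarith
  then show ?thesis
  proof (elim disjE)
    assume "kind a = 0"
    then have "a \<preceq> Bot"
      by (simp add: kind_eq_0_iff)
    moreover have "embed a = embed b"
      using True \<open>kind a = 0\<close> by (simp add: embed_def)
    ultimately show ?thesis
      using leq_trans[OF _ Bot_leq] by (simp add: tle_refl)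
  next
    assume "kind a = 1"
    then have "tle (embed a) (embed b) \<longleftrightarrow> rank a \<le> rank b"
      using True by (simp add: embed_def tle_def g_le_iff rank_less_n)
    then show ?thesis
      using rank_le_iff assms(2) by simp
  next
    assume "kind a = 2"
    then have "a \<preceq> Neg a" "Neg b \<preceq> b"
      using True kind_eq_2_iff[of a] kind_eq_2_iff[of b] by (auto simp: equiv_def)
    then have "a \<preceq> b"
      using leq_linear leq_trans Neg_leq_Neg_iff by metis
    moreover have "embed a = embed b"
      using True \<open>kind a = 2\<close> by (simp add: embed_def)
    ultimately show ?thesis
      by (simp add: tle_refl)
  next
    assume "kind a = 3"
    then have "tle (embed a) (embed b) \<longleftrightarrow> rank (Neg b) \<le> rank (Neg a)"
      using True by (simp add: embed_def tle_def g_le_iff rank_less_n)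
    then show ?thesis
      using rank_le_iff Neg_S_up_to_equiv assms(1) by simp
  next
    assume "kind a = 4"
    then have "Top \<preceq> b"
      using True by (simp add: kind_eq_4_iff)
    moreover have "embed a = embed b"
      using True \<open>kind a = 4\<close> by (simp add: embed_def)
    ultimately show ?thesis
      using leq_trans[OF leq_Top] by (simp add: tle_refl)
  qed
qed

definition canonical_assignment :: "nat \<Rightarrow> 'a \<Rightarrow> tri" where
  "canonical_assignment x = realize (embed (Var x))"

lemma temporal_assignment_canonical: "temporal_assignment canonical_assignment"
  unfolding temporal_assignment_def canonical_assignment_def
  using realize_admissible realizable_embed by blast

lemma sv_canonical_assignment:
  "subformulas \<phi> \<subseteq> S_up_to_equiv \<Longrightarrow> sv canonical_assignment \<phi> = embed \<phi>"
proof (induction \<phi>)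
  case (Var x)
  then show ?case
    by (simp add: canonical_assignment_def realize_admissible realizable_embed)
next
  case Bot
  then show ?case
    by (simp add: embed_def kind_eq_0_iff)
next
  case (Imp a b)
  then have "subformulas a \<subseteq> S_up_to_equiv" "subformulas b \<subseteq> S_up_to_equiv"
    by auto
  then have IH: "sv canonical_assignment a = embed a" "sv canonical_assignment b = embed b"
    and a: "a \<in> S_up_to_equiv" and b: "b \<in> S_up_to_equiv"
    using Imp.IH subformulas_self by blast+
  have Neg_a: "Neg a \<in> S_up_to_equiv"
    using Neg_S_up_to_equiv[OF a] .
  show ?case
  proof (cases "a \<preceq> b")
    case True
    then have "embed (Imp a b) = (None, One)"
      using deriv_iff_Top_leq[of "Imp a b"] embed_eq_top_iff by (simp add: leq_def[of a b])
    then show ?thesis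
      using IH tle_embed_iff[OF a b] True by simp
  next
    case False
    then have "sv canonical_assignment (Imp a b) = tmax (embed (Neg a)) (embed b)"
      using IH tle_embed_iff[OF a b] by (simp add: embed_Neg)
    also have "\<dots> = (if Neg a \<preceq> b then embed b else embed (Neg a))"
      unfolding tmax_def using tle_embed_iff[OF Neg_a b] by simp
    also have "\<dots> = embed (Imp a b)"
    proof (cases "Neg a \<preceq> b")
      case True
      then have "Imp a b \<approx> b"
        using Imp_leq_Neg_or_leq[OF False] leq_trans leq_Imp unfolding equiv_def by blast
      then show ?thesis
        using True embed_equiv by simp
    next
      case nb: False
      then have "Imp a b \<approx> Neg a"
        using Imp_leq_Neg_or_leq[OF False] leq_linear leq_trans Neg_leq_Imp unfolding equiv_def by blast
      then show ?thesis
        using nb embed_equiv by simp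
    qed
    finally show ?thesis .
  qed
qed

end

lemma (in linear_theory) temporal_assignment_agreeing:
  assumes "infinite (UNIV :: 'a set)" and "finite \<Phi>"
  obtains v :: "nat \<Rightarrow> 'a::linorder \<Rightarrow> tri"
  where "temporal_assignment v" "\<And>\<psi>. \<psi> \<in> \<Phi> \<Longrightarrow> sv v \<psi> = (None, One) \<longleftrightarrow> nm_deriv D \<psi>"
proof -
  define P where "P = \<Union> (subformulas ` \<Phi>)"
  define S where "S = P \<union> Neg ` P"
  have "finite S"
    using assms(2) finite_subformulas by (simp add: S_def P_def)
  obtain g :: "nat \<Rightarrow> 'a" where g: "strict_mono_on {..<Suc (card S)} g"
    "\<And>i. i < Suc (card S) \<Longrightarrow> \<exists>t. t < g i"
    using strict_mono_nonminimal_seq[OF assms(1)] by blast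
  have Neg_S: "\<exists>c\<in>S. Neg a \<approx> c" if a: "a \<in> S" for a
  proof (cases "a \<in> P")
    case True
    then show ?thesis
      unfolding S_def equiv_def using leq_refl by blast
  next
    case False
    then obtain c where "c \<in> P" "a = Neg c"
      using a by (auto simp: S_def)
    then show ?thesis
      unfolding S_def using equiv_Neg_Neg by blast
  qed
  interpret lindenbaum_embedding D S g "Suc (card S)"
    by unfold_locales (use \<open>finite S\<close> Neg_S g in auto)
  show thesis
  proof (rule that[OF temporal_assignment_canonical])
    fix \<psi> assume "\<psi> \<in> \<Phi>"
    then have "subformulas \<psi> \<subseteq> S_up_to_equiv"
      using S_subset_S_up_to_equiv by (auto simp: S_def P_def)
    then show "sv canonical_assignment \<psi> = (None, One) \<longleftrightarrow> nm_deriv D \<psi>"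
      by (simp add: sv_canonical_assignment embed_eq_top_iff deriv_iff_Top_leq)
  qed
qed

lemma nm_deriv_complete:
  assumes "infinite (UNIV :: 'a::linorder set)" and "finite \<Gamma>"
    and "temporal_models TYPE('a) \<Gamma> \<phi>"
  shows "nm_deriv \<Gamma> \<phi>"
proof (rule ccontr)
  assume "\<not> nm_deriv \<Gamma> \<phi>"
  then obtain \<Delta> where \<Delta>: "\<Gamma> \<subseteq> \<Delta>" "\<not> nm_deriv \<Delta> \<phi>"
    and "linear_theory \<Delta>"
    by (metis maximal_unprovable_extension maximal_unprovable_linear_theory)
  then obtain v :: "nat \<Rightarrow> 'a \<Rightarrow> tri" where "temporal_assignment v"
    and v: "\<And>\<psi>. \<psi> \<in> insert \<phi> \<Gamma> \<Longrightarrow> sv v \<psi> = (None, One) \<longleftrightarrow> nm_deriv \<Delta> \<psi>"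
    using linear_theory.temporal_assignment_agreeing assms(1,2) by (metis finite_insert)
  moreover have "\<forall>\<psi>\<in>\<Gamma>. sv v \<psi> = (None, One)"
    using v \<Delta>(1) nm_deriv.hyp by blast
  ultimately show False
    using assms(3) v[of \<phi>] \<Delta>(2) unfolding temporal_models_def by blast
qed

theorem mainTheorem7:
  fixes \<Gamma> :: "fm set" and \<phi> :: fm
  assumes "infinite (UNIV :: 'a::linorder set)"
    and "finite \<Gamma>"
  shows "nm_deriv \<Gamma> \<phi> \<longleftrightarrow> temporal_models TYPE('a) \<Gamma> \<phi>"
  using nm_deriv_sound nm_deriv_complete[OF assms] unfolding temporal_models_def by blast

end
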